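(* For every $n$, every graph $G=(V,E)$ on $V=\{1,\ldots,n\}$, every bilinear function $b(\mathbf x)=\sum_{ij\in E}a_{ij}x_ix_j$ with real coefficients, and every $\mathbf x\in[0,1]^n$, \[\operatorname{mcgap}[b](\mathbf x)\leqslant 600\sqrt n\,\operatorname{chgap}[b](\mathbf x).\]
   Context: Let $G=(V,E)$ be an undirected graph with $V=\{1,\ldots,n\}$; write $ij$ for the edge $\{i,j\}$. A bilinear function is $b:[0,1]^n\to\mathbb R$, $b(\mathbf x)=\sum_{ij\in E}a_{ij}x_ix_j$ with real coefficients $a_{ij}$. Its graph is $B=\{(\mathbf x,z)\in[0,1]^n\times\mathbb R: z=b(\mathbf x)\}$, and $\operatorname{conv}(B)$ is its convex hull. The McCormick polytopes are $P=\{(\mathbf x,\mathbf y)\in[0,1]^n\times[0,1]^{|E|}: y_{ij}\le x_i,\ y_{ij}\le x_j,\ y_{ij}\ge x_i+x_j-1\ \forall ij\in E\}$ and $Q=\{(\mathbf x,z)\in[0,1]^n\times\mathbb R:\exists\mathbf y\in[0,1]^{|E|}\text{ with }(\mathbf x,\mathbf y)\in P,\ z=\sum_{ij\in E}a_{ij}y_{ij}\}$. Define for $\mathbf x\in[0,1]^n$: $\operatorname{cav}[b](\mathbf x)=\max\{z:(\mathbf x,z)\in\operatorname{conv}(B)\}$, $\operatorname{vex}[b](\mathbf x)=\min\{z:(\mathbf x,z)\in\operatorname{conv}(B)\}$, $\operatorname{mcu}[b](\mathbf x)=\max\{z:(\mathbf x,z)\in Q\}$, $\operatorname{mcl}[b](\mathbf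 x)=\min\{z:(\mathbf x,z)\in Q\}$, the convex hull gap $\operatorname{chgap}[b]=\operatorname{cav}[b]-\operatorname{vex}[b]$ and the McCormick gap $\operatorname{mcgap}[b]=\operatorname{mcu}[b]-\operatorname{mcl}[b]$. *)

theory Defs
  imports "HOL-Analysis.Analysis"
begin

text \<open>Vertices are the elements of a finite type 'n (playing the role of {1..n}, n = CARD('n)).
  A graph is a set E of 2-element vertex sets (undirected edges ij = {i,j}).\<close>

definition simple_graph :: "('n::finite) set set \<Rightarrow> bool" where
  "simple_graph E \<longleftrightarrow> (\<forall>e\<in>E. card e = 2)"

definition unit_cube :: "(real^'n::finite) set" where
  "unit_cube = {x. \<forall>i. 0 \<le> x$i \<and> x$i \<le> 1}"

definition bil :: "('n::finite) set set \<Rightarrow> ('n set \<Rightarrow> real) \<Rightarrow> real^'n \<Rightarrow> real" where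
  "bil E a x = (\<Sum>e\<in>E. a e * (\<Prod>i\<in>e. x$i))"

definition bil_graph :: "('n::finite) set set \<Rightarrow> ('n set \<Rightarrow> real) \<Rightarrow> ((real^'n) \<times> real) set" where
  "bil_graph E a = {(x, bil E a x) | x. x \<in> unit_cube}"

definition mcP :: "('n::finite) set set \<Rightarrow> ((real^'n) \<times> ('n set \<Rightarrow> real)) set" where
  "mcP E = {(x, y). x \<in> unit_cube \<and>
      (\<forall>e\<in>E. 0 \<le> y e \<and> y e \<le> 1 \<and> (\<forall>i\<in>e. y e \<le> x$i) \<and> (\<Sum>i\<in>e. x$i) - 1 \<le> y e)}"

definition mcQ :: "('n::finite) set set \<Rightarrow> ('n set \<Rightarrow> real) \<Rightarrow> ((real^'n) \<times> real) set" where
  "mcQ E a = {(x, z). \<exists>y. (x, y) \<in> mcP E \<and> z = (\<Sum>e\<in>E. a e * y e)}"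

definition cav :: "('n::finite) set set \<Rightarrow> ('n set \<Rightarrow> real) \<Rightarrow> real^'n \<Rightarrow> real" where
  "cav E a x = Sup {z. (x, z) \<in> convex hull (bil_graph E a)}"

definition vex :: "('n::finite) set set \<Rightarrow> ('n set \<Rightarrow> real) \<Rightarrow> real^'n \<Rightarrow> real" where
  "vex E a x = Inf {z. (x, z) \<in> convex hull (bil_graph E a)}"

definition mcu :: "('n::finite) set set \<Rightarrow> ('n set \<Rightarrow> real) \<Rightarrow> real^'n \<Rightarrow> real" where
  "mcu E a x = Sup {z. (x, z) \<in> mcQ E a}"

definition mcl :: "('n::finite) set set \<Rightarrow> ('n set \<Rightarrow> real) \<Rightarrow> real^'n \<Rightarrow> real" where
  "mcl E a x = Inf {z. (x, z) \<in> mcQ E a}"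

definition chgap :: "('n::finite) set set \<Rightarrow> ('n set \<Rightarrow> real) \<Rightarrow> real^'n \<Rightarrow> real" where
  "chgap E a x = cav E a x - vex E a x"

definition mcgap :: "('n::finite) set set \<Rightarrow> ('n set \<Rightarrow> real) \<Rightarrow> real^'n \<Rightarrow> real" where
  "mcgap E a x = mcu E a x - mcl E a x"

end

theory Submission
  imports Defs
begin

text \<open>
  Write c_e = a_e (min(x_i, x_j) - max(0, x_i + x_j - 1)) for an edge e = ij; the McCormick gap
  at x is at most the sum of the |c_e|. Rounding x to a vertex of the cube by a single uniform
  threshold, read upwards on the vertices with \<open>\<sigma>\<close> = True and downwards on the others, places
  above x a point of conv(B) whose height is a constant plus the c-weight of the
  \<open>\<sigma>\<close>-monochromatic edges. Hence the convex hull gap dominates the difference of these weights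
  for any two colourings. A cut carrying half of the total |c|-weight, random signs on one of its
  sides, Khintchine's inequality with constant 1/4 and Cauchy-Schwarz produce two colourings
  whose difference is at least that total divided by 8 sqrt n.
\<close>

definition spin :: "bool \<Rightarrow> real" where
  "spin b = (if b then 1 else -1)"

lemma spin_mult_self [simp]: "spin b * spin b = 1"
  by (simp add: spin_def)

lemma spin_eq: "spin (a = b) = spin a * spin b"
  by (simp add: spin_def)

lemma sum_spin_mult_eq_0:
  fixes G :: "('n::finite \<Rightarrow> bool) \<Rightarrow> real"
  assumes "\<And>s. G (s(k := \<not> s k)) = G s"
  shows "(\<Sum>s\<in>UNIV. spin (s k) * G s) = 0"
proof -
  let ?flip = "\<lambda>s::'n \<Rightarrow> bool. s(k := \<not> s k)"
  have "(\<Sum>s\<in>UNIV. spin (s k) * G s) = (\<Sum>s\<in>UNIV. spin (?flip s k) * G (?flip s))"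
    by (rule sum.reindex_bij_witness[of _ ?flip ?flip]) auto
  also have "\<dots> = (\<Sum>s\<in>UNIV. - (spin (s k) * G s))"
    by (intro sum.cong) (auto simp: assms spin_def)
  also have "\<dots> = - (\<Sum>s\<in>UNIV. spin (s k) * G s)"
    by (simp add: sum_negf)
  finally show ?thesis by simp
qed

lemma rademacher_moments:
  fixes d :: "'n::finite \<Rightarrow> real"
  assumes "finite A"
  shows "(\<Sum>s\<in>UNIV. (\<Sum>i\<in>A. d i * spin (s i))^2) = real CARD('n \<Rightarrow> bool) * (\<Sum>i\<in>A. (d i)^2)"
    and "(\<Sum>s\<in>UNIV. (\<Sum>i\<in>A. d i * spin (s i))^4) \<le> 3 * real CARD('n \<Rightarrow> bool) * (\<Sum>i\<in>A. (d i)^2)^2"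
  using assms unfolding atomize_conj
proof (induction A rule: finite_induct)
  case empty
  then show ?case by simp
next
  case (insert k A)
  define Z where "Z s = (\<Sum>i\<in>A. d i * spin (s i))" for s :: "'n \<Rightarrow> bool"
  define N where "N = real CARD('n \<Rightarrow> bool)"
  define T where "T = (\<Sum>i\<in>A. (d i)^2)"
  have Z_flip: "Z (s(k := \<not> s k)) = Z s" for s
    unfolding Z_def using insert.hyps by (intro sum.cong) auto
  have odd1: "(\<Sum>s\<in>UNIV. spin (s k) * Z s) = 0"
    and odd3: "(\<Sum>s\<in>UNIV. spin (s k) * (Z s)^3) = 0"
    by (rule sum_spin_mult_eq_0, simp add: Z_flip)+
  have IH2: "(\<Sum>s\<in>UNIV. (Z s)^2) = N * T"
    and IH4: "(\<Sum>s\<in>UNIV. (Z s)^4) \<le> 3 * N * T^2"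
    using insert.IH by (simp_all add: Z_def N_def T_def)
  have split: "(\<Sum>i\<in>insert k A. d i * spin (s i)) = d k * spin (s k) + Z s" for s
    using insert.hyps by (simp add: Z_def)
  have square: "(d k * spin (s k) + Z s)^2 = (d k)^2 + 2 * d k * (spin (s k) * Z s) + (Z s)^2" for s
    using spin_mult_self[of "s k"] by (simp add: power2_eq_square algebra_simps)
  have fourth: "(d k * spin (s k) + Z s)^4 = (d k)^4 + 4 * (d k)^3 * (spin (s k) * Z s)
      + 6 * (d k)^2 * (Z s)^2 + 4 * d k * (spin (s k) * (Z s)^3) + (Z s)^4" for s
  proof -
    have "(d k * spin (s k) + Z s)^4 = (d k)^4 * (spin (s k) * spin (s k))^2
        + 4 * (d k)^3 * (spin (s k) * spin (s k)) * (spin (s k) * Z s)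
        + 6 * (d k)^2 * (spin (s k) * spin (s k)) * (Z s)^2 + 4 * d k * (spin (s k) * (Z s)^3) + (Z s)^4"
      by (simp add: power2_eq_square power3_eq_cube power4_eq_xxxx algebra_simps)
    then show ?thesis by simp
  qed
  have sum2: "(\<Sum>s\<in>UNIV. (d k * spin (s k) + Z s)^2) = N * (d k)^2 + N * T"
    unfolding square sum.distrib sum_distrib_left[symmetric] odd1 IH2 by (simp add: N_def)
  have sum4: "(\<Sum>s\<in>UNIV. (d k * spin (s k) + Z s)^4)
      = N * (d k)^4 + 6 * (d k)^2 * (N * T) + (\<Sum>s\<in>UNIV. (Z s)^4)"
    unfolding fourth sum.distrib sum_distrib_left[symmetric] odd1 odd3 IH2 by (simp add: N_def)
  have "0 \<le> N * (d k)^4" by (simp add: N_def)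
  then have "N * (d k)^4 + 6 * (d k)^2 * (N * T) + 3 * N * T^2 \<le> 3 * N * ((d k)^2 + T)^2"
    by (simp add: power2_eq_square power4_eq_xxxx algebra_simps)
  moreover have "(\<Sum>i\<in>insert k A. (d i)^2) = (d k)^2 + T"
    using insert.hyps by (simp add: T_def)
  ultimately show ?case
    unfolding split sum2 sum4 using IH4 by (simp add: N_def algebra_simps)
qed

lemma abs_ge_quartic_minorant:
  fixes t y :: real
  assumes "t > 0"
  shows "y^2 / t - y^4 / (4 * t^3) \<le> \<bar>y\<bar>"
proof -
  define u where "u = \<bar>y\<bar>"
  have "u \<ge> 0" by (simp add: u_def)
  have key: "4 * t^2 * u^2 - u^4 \<le> 4 * t^3 * u"
  proof (cases "u \<le> t")
    case True
    have "0 \<le> u * (u^3 + 4 * t^2 * (t - u))"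
      using True \<open>u \<ge> 0\<close> assms by (intro mult_nonneg_nonneg) auto
    then show ?thesis by (simp add: algebra_simps power2_eq_square power3_eq_cube power4_eq_xxxx)
  next
    case False
    have "0 \<le> (u^2 - 2 * t^2)^2 + 4 * t^3 * (u - t)"
      using False assms by (intro add_nonneg_nonneg) auto
    then show ?thesis by (simp add: algebra_simps power2_eq_square power3_eq_cube power4_eq_xxxx)
  qed
  have "y^2 / t - y^4 / (4 * t^3) = (4 * t^2 * u^2 - u^4) / (4 * t^3)"
    using assms by (simp add: u_def power2_abs field_simps power2_eq_square power3_eq_cube)
  also have "\<dots> \<le> (4 * t^3 * u) / (4 * t^3)"
    using key assms by (intro divide_right_mono) auto
  finally show ?thesis using assms by (simp add: u_def)
qed

text \<open>Integrating the quartic minorant of |y| with t the L2 norm of d against the second and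
  fourth moments gives N t - 3 N t / 4.\<close>

lemma khintchine_lower:
  fixes d :: "'n::finite \<Rightarrow> real"
  shows "real CARD('n \<Rightarrow> bool) * L2_set d UNIV / 4 \<le> (\<Sum>s\<in>UNIV. \<bar>\<Sum>i\<in>UNIV. d i * spin (s i)\<bar>)"
proof -
  define N where "N = real CARD('n \<Rightarrow> bool)"
  define T where "T = (\<Sum>i\<in>UNIV. (d i)^2)"
  define t where "t = L2_set d UNIV"
  define Y where "Y s = (\<Sum>i\<in>UNIV. d i * spin (s i))" for s :: "'n \<Rightarrow> bool"
  have moments: "(\<Sum>s\<in>UNIV. (Y s)^2) = N * T" "(\<Sum>s\<in>UNIV. (Y s)^4) \<le> 3 * N * T^2"
    using rademacher_moments[of UNIV d] by (simp_all add: Y_def N_def T_def)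
  show ?thesis
  proof (cases "t = 0")
    case True
    then show ?thesis by (simp add: t_def sum_nonneg)
  next
    case False
    then have "t > 0" by (simp add: t_def order_less_le)
    have "t^2 = T" by (simp add: t_def T_def L2_set_def sum_nonneg)
    have "N * t / 4 = N * T / t - 3 * N * T^2 / (4 * t^3)"
      using \<open>t > 0\<close> by (simp add: \<open>t^2 = T\<close>[symmetric] field_simps power2_eq_square power3_eq_cube)
    also have "\<dots> \<le> (\<Sum>s\<in>UNIV. (Y s)^2) / t - (\<Sum>s\<in>UNIV. (Y s)^4) / (4 * t^3)"
      using moments \<open>t > 0\<close> by (simp add: divide_right_mono)
    also have "\<dots> = (\<Sum>s\<in>UNIV. (Y s)^2 / t - (Y s)^4 / (4 * t^3))"
      by (simp add: sum_subtractf sum_divide_distrib)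
    also have "\<dots> \<le> (\<Sum>s\<in>UNIV. \<bar>Y s\<bar>)"
      by (intro sum_mono abs_ge_quartic_minorant \<open>t > 0\<close>)
    finally show ?thesis by (simp add: Y_def N_def t_def)
  qed
qed

lemma exists_ge_average:
  fixes f :: "'a::finite \<Rightarrow> real"
  assumes "real CARD('a) * m \<le> (\<Sum>s\<in>UNIV. f s)"
  shows "\<exists>s. m \<le> f s"
proof (rule ccontr)
  assume "\<not> ?thesis"
  then have "(\<Sum>s\<in>UNIV. f s) < (\<Sum>s\<in>(UNIV::'a set). m)"
    by (intro sum_strict_mono) (auto simp: not_le)
  then show False using assms by simp
qed

lemma exists_signs_sum_abs_ge:
  fixes D :: "'m \<Rightarrow> 'n::finite \<Rightarrow> real"
  shows "\<exists>s. (\<Sum>j\<in>J. \<Sum>i\<in>UNIV. \<bar>D j i\<bar>)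
           \<le> 4 * sqrt (real CARD('n)) * (\<Sum>j\<in>J. \<bar>\<Sum>i\<in>UNIV. D j i * spin (s i)\<bar>)"
proof -
  define N where "N = real CARD('n \<Rightarrow> bool)"
  define r where "r = sqrt (real CARD('n))"
  have "r > 0" by (simp add: r_def)
  have row: "N * (\<Sum>i\<in>UNIV. \<bar>D j i\<bar>) / (4 * r) \<le> (\<Sum>s\<in>UNIV. \<bar>\<Sum>i\<in>UNIV. D j i * spin (s i)\<bar>)" for j
  proof -
    have "(\<Sum>i\<in>UNIV. \<bar>D j i\<bar>) \<le> r * L2_set (D j) UNIV"
      using L2_set_mult_ineq[of "\<lambda>_. 1" "D j" UNIV] by (simp add: L2_set_constant r_def)
    then have "(\<Sum>i\<in>UNIV. \<bar>D j i\<bar>) / r \<le> L2_set (D j) UNIV"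
      using \<open>r > 0\<close> by (simp add: divide_le_eq mult.commute)
    then have "N * ((\<Sum>i\<in>UNIV. \<bar>D j i\<bar>) / r) / 4 \<le> N * L2_set (D j) UNIV / 4"
      by (intro divide_right_mono mult_left_mono) (auto simp: N_def)
    also have "\<dots> \<le> (\<Sum>s\<in>UNIV. \<bar>\<Sum>i\<in>UNIV. D j i * spin (s i)\<bar>)"
      using khintchine_lower[of "D j"] by (simp add: N_def)
    finally show ?thesis by simp
  qed
  have "N * ((\<Sum>j\<in>J. \<Sum>i\<in>UNIV. \<bar>D j i\<bar>) / (4 * r)) = (\<Sum>j\<in>J. N * (\<Sum>i\<in>UNIV. \<bar>D j i\<bar>) / (4 * r))"
    by (simp add: sum_distrib_left sum_divide_distrib)
  also have "\<dots> \<le> (\<Sum>j\<in>J. \<Sum>s\<in>UNIV. \<bar>\<Sum>i\<in>UNIV. D j i * spin (s i)\<bar>)"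
    by (intro sum_mono row)
  also have "\<dots> = (\<Sum>s\<in>UNIV. \<Sum>j\<in>J. \<bar>\<Sum>i\<in>UNIV. D j i * spin (s i)\<bar>)"
    by (rule sum.swap)
  finally obtain s where "(\<Sum>j\<in>J. \<Sum>i\<in>UNIV. \<bar>D j i\<bar>) / (4 * r) \<le> (\<Sum>j\<in>J. \<bar>\<Sum>i\<in>UNIV. D j i * spin (s i)\<bar>)"
    using exists_ge_average[of "(\<Sum>j\<in>J. \<Sum>i\<in>UNIV. \<bar>D j i\<bar>) / (4 * r)"] by (auto simp: N_def)
  then show ?thesis using \<open>r > 0\<close> by (auto simp: r_def field_simps)
qed

definition monochromatic :: "('n \<Rightarrow> bool) \<Rightarrow> 'n set \<Rightarrow> bool" where
  "monochromatic \<sigma> e \<longleftrightarrow> (\<forall>i\<in>e. \<forall>j\<in>e. \<sigma> i = \<sigma> j)"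

lemma monochromatic_pair [simp]: "monochromatic \<sigma> {i, j} \<longleftrightarrow> \<sigma> i = \<sigma> j"
  by (auto simp: monochromatic_def)

definition monochromatic_weight :: "'n set set \<Rightarrow> ('n set \<Rightarrow> real) \<Rightarrow> ('n \<Rightarrow> bool) \<Rightarrow> real" where
  "monochromatic_weight E c \<sigma> = (\<Sum>e\<in>E. if monochromatic \<sigma> e then c e else 0)"

lemma simple_graph_edgeE:
  assumes "simple_graph E" "e \<in> E"
  obtains i j where "e = {i, j}" "i \<noteq> j"
  using assms by (auto simp: simple_graph_def card_2_iff)

lemma exists_cut_half_weight:
  fixes E :: "('n::finite) set set" and w :: "'n set \<Rightarrow> real"
  assumes "simple_graph E"
  shows "\<exists>l. (\<Sum>e\<in>E. w e) \<le> 2 * (\<Sum>e\<in>{e\<in>E. \<not> monochromatic l e}. w e)"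
proof -
  define N where "N = real CARD('n \<Rightarrow> bool)"
  have cut_count: "(\<Sum>l\<in>UNIV. if monochromatic l e then 0 else 1) = N / 2" if e: "e \<in> E" for e
  proof -
    obtain i j where ij: "e = {i, j}" "i \<noteq> j"
      using simple_graph_edgeE[OF assms e] .
    have "(\<Sum>l\<in>UNIV. if monochromatic l e then 0 else 1) = (\<Sum>l\<in>UNIV. (1 - spin (l i) * spin (l j)) / 2)"
      using ij by (intro sum.cong) (auto simp: spin_def)
    also have "\<dots> = (N - (\<Sum>l\<in>UNIV. spin (l i) * spin (l j))) / 2"
      by (simp add: sum_divide_distrib[symmetric] sum_subtractf N_def)
    also have "(\<Sum>l\<in>UNIV. spin (l i) * spin (l j)) = 0"
      by (rule sum_spin_mult_eq_0) (use ij in auto)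
    finally show ?thesis by simp
  qed
  have "(\<Sum>e\<in>{e\<in>E. \<not> monochromatic l e}. w e) = (\<Sum>e\<in>E. w e * (if monochromatic l e then 0 else 1))" for l
    by (simp add: sum.inter_filter) (intro sum.cong, auto)
  then have "(\<Sum>l\<in>UNIV. 2 * (\<Sum>e\<in>{e\<in>E. \<not> monochromatic l e}. w e))
      = 2 * (\<Sum>e\<in>E. w e * (\<Sum>l\<in>UNIV. if monochromatic l e then 0 else 1))"
    by (simp add: sum_distrib_left sum.swap[of _ UNIV E])
  also have "\<dots> = N * (\<Sum>e\<in>E. w e)"
    by (simp add: cut_count sum_distrib_left sum_distrib_right algebra_simps cong: sum.cong)
  finally show ?thesis
    by (intro exists_ge_average) (simp add: N_def)
qed

lemma sum_cut_edges_eq_sum_neighbours: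
  fixes E :: "('n::finite) set set" and g :: "'n set \<Rightarrow> real"
  assumes "simple_graph E"
  shows "(\<Sum>e\<in>{e\<in>E. \<not> monochromatic l e}. g e)
       = (\<Sum>j\<in>{j. \<not> l j}. \<Sum>i\<in>UNIV. if l i \<and> {i, j} \<in> E then g {i, j} else 0)"
proof -
  define P where "P = {p \<in> {j. \<not> l j} \<times> UNIV. l (snd p) \<and> {snd p, fst p} \<in> E}"
  have "(\<Sum>j\<in>{j. \<not> l j}. \<Sum>i\<in>UNIV. if l i \<and> {i, j} \<in> E then g {i, j} else 0)
      = (\<Sum>p\<in>{j. \<not> l j} \<times> UNIV. if l (snd p) \<and> {snd p, fst p} \<in> E then g {snd p, fst p} else 0)"
    by (simp add: sum.cartesian_product case_prod_beta)
  also have "\<dots> = (\<Sum>p\<in>P. g {snd p, fst p})"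
    unfolding P_def by (subst sum.inter_filter) auto
  also have "\<dots> = (\<Sum>e\<in>{e\<in>E. \<not> monochromatic l e}. g e)"
  proof (rule sum.reindex_cong[of "\<lambda>p. {snd p, fst p}", symmetric])
    show "inj_on (\<lambda>p. {snd p, fst p}) P"
      unfolding P_def by (auto simp: inj_on_def doubleton_eq_iff)
    show "{e\<in>E. \<not> monochromatic l e} = (\<lambda>p. {snd p, fst p}) ` P"
    proof (intro equalityI subsetI)
      fix e assume e: "e \<in> {e\<in>E. \<not> monochromatic l e}"
      obtain i' j' where ij': "e = {i', j'}" "i' \<noteq> j'"
        using simple_graph_edgeE[OF assms, of e] e by auto
      with e have "l i' \<noteq> l j'" by auto
      then obtain i j where "e = {i, j}" "l i" "\<not> l j"
        using ij'(1) insert_commute[of i' j' "{}"] by (cases "l i'") auto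
      then show "e \<in> (\<lambda>p. {snd p, fst p}) ` P"
        using e unfolding P_def by (auto intro!: image_eqI[where x = "(j, i)"])
    qed (auto simp: P_def)
  qed auto
  finally show ?thesis ..
qed

lemma monochromatic_weight_diff_flip:
  fixes E :: "('n::finite) set set"
  assumes "simple_graph E"
  shows "monochromatic_weight E c \<sigma> - monochromatic_weight E c (\<lambda>v. l v = \<sigma> v)
       = (\<Sum>e\<in>{e\<in>E. \<not> monochromatic l e}. c e * spin (monochromatic \<sigma> e))"
proof -
  have "(if monochromatic \<sigma> e then c e else 0) - (if monochromatic (\<lambda>v. l v = \<sigma> v) e then c e else 0)
      = (if \<not> monochromatic l e then c e * spin (monochromatic \<sigma> e) else 0)" if e: "e \<in> E" for e
  proof -
    obtain i j where "e = {i, j}" "i \<noteq> j"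
      using simple_graph_edgeE[OF assms e] .
    then show ?thesis by (cases "l i"; cases "l j") (auto simp: spin_def)
  qed
  then show ?thesis
    unfolding monochromatic_weight_def sum_subtractf[symmetric]
    by (simp add: sum.inter_filter cong: sum.cong)
qed

lemma exists_colourings_weight_gap:
  fixes E :: "('n::finite) set set" and c :: "'n set \<Rightarrow> real"
  assumes "simple_graph E"
  shows "\<exists>\<sigma> \<sigma>'. (\<Sum>e\<in>E. \<bar>c e\<bar>)
           \<le> 8 * sqrt (real CARD('n)) * (monochromatic_weight E c \<sigma> - monochromatic_weight E c \<sigma>')"
proof -
  obtain l where l: "(\<Sum>e\<in>E. \<bar>c e\<bar>) \<le> 2 * (\<Sum>e\<in>{e\<in>E. \<not> monochromatic l e}. \<bar>c e\<bar>)"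
    using exists_cut_half_weight[OF assms] by blast
  define D where "D j i = (if l i \<and> {i, j} \<in> E then c {i, j} else 0)" for j i
  have cut: "(\<Sum>e\<in>{e\<in>E. \<not> monochromatic l e}. \<bar>c e\<bar>) = (\<Sum>j\<in>{j. \<not> l j}. \<Sum>i\<in>UNIV. \<bar>D j i\<bar>)"
    unfolding sum_cut_edges_eq_sum_neighbours[OF assms] D_def by (simp add: if_distrib)
  obtain s where s: "(\<Sum>j\<in>{j. \<not> l j}. \<Sum>i\<in>UNIV. \<bar>D j i\<bar>)
      \<le> 4 * sqrt (real CARD('n)) * (\<Sum>j\<in>{j. \<not> l j}. \<bar>\<Sum>i\<in>UNIV. D j i * spin (s i)\<bar>)"
    using exists_signs_sum_abs_ge by blast
  text \<open>Colour the side l by s, and each other vertex by the sign of its signed c-weight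
    towards l; flipping the colours outside l then turns every cut edge's contribution
    into an absolute value.\<close>
  define \<sigma> where "\<sigma> v = (if l v then s v else 0 \<le> (\<Sum>i\<in>UNIV. D v i * spin (s i)))" for v
  have "monochromatic_weight E c \<sigma> - monochromatic_weight E c (\<lambda>v. l v = \<sigma> v)
      = (\<Sum>j\<in>{j. \<not> l j}. \<Sum>i\<in>UNIV. if l i \<and> {i, j} \<in> E then c {i, j} * spin (\<sigma> i = \<sigma> j) else 0)"
    unfolding monochromatic_weight_diff_flip[OF assms] sum_cut_edges_eq_sum_neighbours[OF assms]
    by (intro sum.cong refl) simp
  also have "\<dots> = (\<Sum>j\<in>{j. \<not> l j}. spin (\<sigma> j) * (\<Sum>i\<in>UNIV. D j i * spin (s i)))"
  proof (intro sum.cong refl)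
    fix j
    have "l i \<Longrightarrow> \<sigma> i = s i" for i by (simp add: \<sigma>_def)
    then show "(\<Sum>i\<in>UNIV. if l i \<and> {i, j} \<in> E then c {i, j} * spin (\<sigma> i = \<sigma> j) else 0)
        = spin (\<sigma> j) * (\<Sum>i\<in>UNIV. D j i * spin (s i))"
      unfolding sum_distrib_left by (intro sum.cong refl) (simp add: D_def spin_eq)
  qed
  also have "\<dots> = (\<Sum>j\<in>{j. \<not> l j}. \<bar>\<Sum>i\<in>UNIV. D j i * spin (s i)\<bar>)"
    by (intro sum.cong) (auto simp: \<sigma>_def spin_def)
  finally have gap: "monochromatic_weight E c \<sigma> - monochromatic_weight E c (\<lambda>v. l v = \<sigma> v)
      = (\<Sum>j\<in>{j. \<not> l j}. \<bar>\<Sum>i\<in>UNIV. D j i * spin (s i)\<bar>)" .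
  have "(\<Sum>e\<in>E. \<bar>c e\<bar>) \<le> 2 * (4 * sqrt (real CARD('n)) * (\<Sum>j\<in>{j. \<not> l j}. \<bar>\<Sum>i\<in>UNIV. D j i * spin (s i)\<bar>))"
    using l s unfolding cut by linarith
  then have "(\<Sum>e\<in>E. \<bar>c e\<bar>) \<le> 8 * sqrt (real CARD('n))
      * (monochromatic_weight E c \<sigma> - monochromatic_weight E c (\<lambda>v. l v = \<sigma> v))"
    unfolding gap by simp
  then show ?thesis by blast
qed

definition mc_upper :: "real^'n::finite \<Rightarrow> 'n set \<Rightarrow> real" where
  "mc_upper x e = Min ((\<lambda>i. x$i) ` e)"

definition mc_lower :: "real^'n::finite \<Rightarrow> 'n set \<Rightarrow> real" where
  "mc_lower x e = max 0 ((\<Sum>i\<in>e. x$i) - 1)"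

lemma mc_upper_pair [simp]: "mc_upper x {i, j} = min (x$i) (x$j)"
  by (simp add: mc_upper_def)

lemma mc_lower_pair [simp]: "i \<noteq> j \<Longrightarrow> mc_lower x {i, j} = max 0 (x$i + x$j - 1)"
  by (simp add: mc_lower_def)

text \<open>Rounding by a threshold U uniform on [0,1]: vertex i is rounded up with probability x_i,
  and two vertices with equal (opposite) \<open>\<sigma>\<close>-values are rounded up together with the largest
  (smallest) probability compatible with their marginals.\<close>

definition threshold_round :: "('n \<Rightarrow> bool) \<Rightarrow> real^'n \<Rightarrow> real \<Rightarrow> 'n \<Rightarrow> bool" where
  "threshold_round \<sigma> x U i \<longleftrightarrow> (if \<sigma> i then U < x$i else 1 - x$i < U)"

definition rounding_weight :: "('n \<Rightarrow> bool) \<Rightarrow> real^'n \<Rightarrow> ('n \<Rightarrow> bool) \<Rightarrow> real" where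
  "rounding_weight \<sigma> x f = measure lborel {U \<in> {0..1}. threshold_round \<sigma> x U = f}"

lemma sum_rounding_weight:
  fixes x :: "real^'n::finite"
  shows "(\<Sum>f\<in>UNIV. if P f then rounding_weight \<sigma> x f else 0)
       = measure lborel {U \<in> {0..1}. P (threshold_round \<sigma> x U)}"
proof -
  have sets: "{U \<in> {0..1}. threshold_round \<sigma> x U = f} \<in> sets lborel" for f
  proof -
    have "{U \<in> {0..1}. threshold_round \<sigma> x U = f}
        = {U \<in> space lborel. U \<in> {0..1} \<and> (\<forall>i. (if \<sigma> i then U < x$i else 1 - x$i < U) = f i)}"
      by (auto simp: threshold_round_def fun_eq_iff)
    also have "\<dots> \<in> sets lborel" by measurable
    finally show ?thesis .
  qed
  have "(\<Sum>f\<in>UNIV. if P f then rounding_weight \<sigma> x f else 0) = (\<Sum>f | P f. rounding_weight \<sigma> x f)"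
    by (simp add: sum.If_cases)
  also have "\<dots> = measure lborel (\<Union>f\<in>{f. P f}. {U \<in> {0..1}. threshold_round \<sigma> x U = f})"
    unfolding rounding_weight_def
  proof (rule measure_finite_Union[symmetric])
    show "disjoint_family_on (\<lambda>f. {U \<in> {0..1}. threshold_round \<sigma> x U = f}) {f. P f}"
      by (auto simp: disjoint_family_on_def)
    show "emeasure lborel {U \<in> {0..1}. threshold_round \<sigma> x U = f} \<noteq> \<infinity>" for f
    proof -
      have "emeasure lborel {U \<in> {0..1}. threshold_round \<sigma> x U = f} \<le> emeasure lborel {0..1::real}"
        by (rule emeasure_mono) auto
      then show ?thesis by (auto simp: top_unique)
    qed
  qed (use sets in auto)
  also have "(\<Union>f\<in>{f. P f}. {U \<in> {0..1}. threshold_round \<sigma> x U = f})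
      = {U \<in> {0..1}. P (threshold_round \<sigma> x U)}"
    by auto
  finally show ?thesis .
qed

lemma measure_rounded_up:
  assumes "x \<in> unit_cube"
  shows "measure lborel {U \<in> {0..1}. threshold_round \<sigma> x U i} = x$i"
proof -
  have "0 \<le> x$i" "x$i \<le> 1" using assms by (auto simp: unit_cube_def)
  then show ?thesis
  proof (cases "\<sigma> i")
    case True
    then have "{U \<in> {0..1}. threshold_round \<sigma> x U i} = {0..<x$i}"
      using \<open>x$i \<le> 1\<close> by (auto simp: threshold_round_def)
    then show ?thesis using \<open>0 \<le> x$i\<close> by simp
  next
    case False
    then have "{U \<in> {0..1}. threshold_round \<sigma> x U i} = {1 - x$i<..1}"
      using \<open>0 \<le> x$i\<close> \<open>x$i \<le> 1\<close> by (auto simp: threshold_round_def)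
    then show ?thesis using \<open>0 \<le> x$i\<close> by simp
  qed
qed

lemma measure_rounded_up_pair:
  assumes "x \<in> unit_cube"
  shows "measure lborel {U \<in> {0..1}. threshold_round \<sigma> x U i \<and> threshold_round \<sigma> x U j}
    = (if \<sigma> i = \<sigma> j then min (x$i) (x$j) else max 0 (x$i + x$j - 1))"
proof -
  have cube: "0 \<le> x$k" "x$k \<le> 1" for k using assms by (auto simp: unit_cube_def)
  have opposite: "measure lborel {U \<in> {0..1}. U < x$k \<and> 1 - x$m < U} = max 0 (x$k + x$m - 1)" for k m
  proof -
    have interval: "{U \<in> {0..1}. U < x$k \<and> 1 - x$m < U} = {1 - x$m<..<x$k}"
      using cube[of k] cube[of m] by auto
    show ?thesis unfolding interval by (cases "1 - x$m \<le> x$k") simp_all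
  qed
  show ?thesis
  proof (cases "\<sigma> i"; cases "\<sigma> j")
    assume "\<sigma> i" "\<sigma> j"
    then have "{U \<in> {0..1}. threshold_round \<sigma> x U i \<and> threshold_round \<sigma> x U j} = {0..<min (x$i) (x$j)}"
      using cube[of i] cube[of j] by (auto simp: threshold_round_def)
    then show ?thesis using cube \<open>\<sigma> i\<close> \<open>\<sigma> j\<close> by simp
  next
    assume "\<not> \<sigma> i" "\<not> \<sigma> j"
    then have "{U \<in> {0..1}. threshold_round \<sigma> x U i \<and> threshold_round \<sigma> x U j}
        = {max (1 - x$i) (1 - x$j)<..1}"
      using cube[of i] cube[of j] by (auto simp: threshold_round_def)
    then show ?thesis using cube \<open>\<not> \<sigma> i\<close> \<open>\<not> \<sigma> j\<close> by (simp add: min_def max_def)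
  next
    assume "\<sigma> i" "\<not> \<sigma> j"
    then show ?thesis using opposite[of i j] by (simp add: threshold_round_def)
  next
    assume "\<not> \<sigma> i" "\<sigma> j"
    then show ?thesis using opposite[of j i] by (simp add: threshold_round_def conj_commute add.commute)
  qed
qed

lemma rounding_point_in_convex_hull:
  fixes E :: "('n::finite) set set" and x :: "real^'n"
  assumes E: "simple_graph E" and x: "x \<in> unit_cube"
  shows "(x, \<Sum>e\<in>E. a e * (if monochromatic \<sigma> e then mc_upper x e else mc_lower x e))
           \<in> convex hull bil_graph E a"
proof -
  define v where "v f = (\<chi> i. if f i then 1 else (0::real))" for f :: "'n \<Rightarrow> bool"
  have weight_sum: "(\<Sum>f\<in>UNIV. rounding_weight \<sigma> x f) = 1"
  proof -
    have "(\<Sum>f\<in>UNIV. rounding_weight \<sigma> x f) = measure lborel {U \<in> {0..1::real}. True}"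
      using sum_rounding_weight[where P = "\<lambda>_. True" and \<sigma> = \<sigma> and x = x] by (simp only: if_True)
    also have "{U \<in> {0..1::real}. True} = {0..1}" by blast
    finally show ?thesis by simp
  qed
  have weight_mean: "(\<Sum>f\<in>UNIV. rounding_weight \<sigma> x f *\<^sub>R v f) = x"
  proof (subst vec_eq_iff, intro allI)
    fix i
    have "(\<Sum>f\<in>UNIV. rounding_weight \<sigma> x f *\<^sub>R v f) $ i = (\<Sum>f\<in>UNIV. rounding_weight \<sigma> x f * (if f i then 1 else 0))"
      by (simp add: v_def)
    also have "\<dots> = (\<Sum>f\<in>UNIV. if f i then rounding_weight \<sigma> x f else 0)"
      by (intro sum.cong) auto
    also have "\<dots> = x $ i"
      using sum_rounding_weight[where P = "\<lambda>f. f i" and \<sigma> = \<sigma> and x = x] measure_rounded_up[OF x]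
      by simp
    finally show "(\<Sum>f\<in>UNIV. rounding_weight \<sigma> x f *\<^sub>R v f) $ i = x $ i" .
  qed
  have weight_height: "(\<Sum>f\<in>UNIV. rounding_weight \<sigma> x f * bil E a (v f))
      = (\<Sum>e\<in>E. a e * (if monochromatic \<sigma> e then mc_upper x e else mc_lower x e))"
  proof -
    have "(\<Sum>f\<in>UNIV. rounding_weight \<sigma> x f * bil E a (v f)) = (\<Sum>e\<in>E. a e * (\<Sum>f\<in>UNIV. rounding_weight \<sigma> x f * (\<Prod>i\<in>e. v f $ i)))"
      unfolding bil_def by (simp add: sum_distrib_left sum.swap[of _ UNIV E] algebra_simps)
    also have "\<dots> = (\<Sum>e\<in>E. a e * (if monochromatic \<sigma> e then mc_upper x e else mc_lower x e))"
    proof (intro sum.cong refl)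
      fix e assume "e \<in> E"
      then obtain i j where ij: "e = {i, j}" "i \<noteq> j"
        using simple_graph_edgeE[OF E] by blast
      have "(\<Sum>f\<in>UNIV. rounding_weight \<sigma> x f * (\<Prod>i\<in>e. v f $ i)) = (\<Sum>f\<in>UNIV. if f i \<and> f j then rounding_weight \<sigma> x f else 0)"
        using ij by (intro sum.cong) (auto simp: v_def)
      also have "\<dots> = (if monochromatic \<sigma> e then mc_upper x e else mc_lower x e)"
        using sum_rounding_weight[where P = "\<lambda>f. f i \<and> f j" and \<sigma> = \<sigma> and x = x]
          measure_rounded_up_pair[OF x] ij
        by simp
      finally show "a e * (\<Sum>f\<in>UNIV. rounding_weight \<sigma> x f * (\<Prod>i\<in>e. v f $ i))
          = a e * (if monochromatic \<sigma> e then mc_upper x e else mc_lower x e)" by simp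
    qed
    finally show ?thesis .
  qed
  have "(\<Sum>f\<in>UNIV. rounding_weight \<sigma> x f *\<^sub>R (v f, bil E a (v f))) \<in> convex hull bil_graph E a"
  proof (rule convex_sum[OF finite convex_convex_hull weight_sum])
    show "0 \<le> rounding_weight \<sigma> x f" for f by (simp add: rounding_weight_def)
    have "v f \<in> unit_cube" for f by (simp add: unit_cube_def v_def)
    then show "(v f, bil E a (v f)) \<in> convex hull bil_graph E a" for f
      by (intro hull_inc) (auto simp: bil_graph_def)
  qed
  moreover have "(\<Sum>f\<in>UNIV. rounding_weight \<sigma> x f *\<^sub>R (v f, bil E a (v f)))
      = (x, \<Sum>e\<in>E. a e * (if monochromatic \<sigma> e then mc_upper x e else mc_lower x e))"
    unfolding prod_eq_iff fst_sum snd_sum fst_scaleR snd_scaleR fst_conv snd_conv real_scaleR_def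
    using weight_mean weight_height by (simp only:)
  ultimately show ?thesis by simp
qed

lemma compact_bil_graph: "compact (bil_graph E a)"
proof -
  have "continuous_on (cbox 0 1) (\<lambda>y. (y, bil E a y))"
    unfolding bil_def by (intro continuous_intros)
  then have "compact ((\<lambda>y. (y, bil E a y)) ` cbox 0 1)"
    by (rule compact_continuous_image[OF _ compact_cbox])
  moreover have "bil_graph E a = (\<lambda>y. (y, bil E a y)) ` cbox 0 1"
    by (auto simp: bil_graph_def unit_cube_def mem_box_cart)
  ultimately show ?thesis by simp
qed

lemma vex_le_cav_bounds:
  assumes "(x, z) \<in> convex hull bil_graph E a"
  shows "vex E a x \<le> z" and "z \<le> cav E a x"
proof -
  obtain B where B: "\<And>p. p \<in> convex hull bil_graph E a \<Longrightarrow> norm p \<le> B"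
    using compact_imp_bounded[OF compact_convex_hull[OF compact_bil_graph]]
    unfolding bounded_iff by blast
  have bound: "\<bar>t\<bar> \<le> B" if "(x, t) \<in> convex hull bil_graph E a" for t
    using B[OF that] norm_snd_le[of t x] by simp
  have "bdd_below {t. (x, t) \<in> convex hull bil_graph E a}"
    by (rule bdd_belowI[of _ "- B"]) (use bound in force)
  moreover have "bdd_above {t. (x, t) \<in> convex hull bil_graph E a}"
    by (rule bdd_aboveI[of _ B]) (use bound in force)
  ultimately show "vex E a x \<le> z" and "z \<le> cav E a x"
    unfolding vex_def cav_def using assms by (auto intro: cInf_lower cSup_upper)
qed

lemma mcP_edge_bounds:
  assumes "simple_graph E" "(x, y) \<in> mcP E" "e \<in> E"
  shows "mc_lower x e \<le> y e" and "y e \<le> mc_upper x e"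
proof -
  obtain i j where ij: "e = {i, j}" "i \<noteq> j"
    using simple_graph_edgeE[OF assms(1,3)] .
  have "0 \<le> y e" "y e \<le> x$i" "y e \<le> x$j" "x$i + x$j - 1 \<le> y e"
    using assms(2,3) ij by (auto simp: mcP_def)
  then show "mc_lower x e \<le> y e" and "y e \<le> mc_upper x e"
    using ij by simp_all
qed

lemma mc_lower_in_mcP:
  assumes "simple_graph E" "x \<in> unit_cube"
  shows "(x, mc_lower x) \<in> mcP E"
proof -
  have "0 \<le> mc_lower x e \<and> mc_lower x e \<le> 1 \<and> (\<forall>i\<in>e. mc_lower x e \<le> x$i)
      \<and> (\<Sum>i\<in>e. x$i) - 1 \<le> mc_lower x e" if e: "e \<in> E" for e
  proof -
    obtain i j where ij: "e = {i, j}" "i \<noteq> j"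
      using simple_graph_edgeE[OF assms(1) e] .
    have cube: "0 \<le> x$k" "x$k \<le> 1" for k using assms(2) by (auto simp: unit_cube_def)
    show ?thesis using ij cube[of i] cube[of j] by auto
  qed
  then show ?thesis using assms(2) by (auto simp: mcP_def)
qed

lemma mcgap_le_sum_abs:
  fixes E :: "('n::finite) set set"
  assumes E: "simple_graph E" and x: "x \<in> unit_cube"
  shows "mcgap E a x \<le> (\<Sum>e\<in>E. \<bar>a e * (mc_upper x e - mc_lower x e)\<bar>)"
proof -
  define upper where "upper e = (if 0 \<le> a e then a e * mc_upper x e else a e * mc_lower x e)" for e
  define lower where "lower e = (if 0 \<le> a e then a e * mc_lower x e else a e * mc_upper x e)" for e
  have term_bounds: "lower e \<le> a e * y e \<and> a e * y e \<le> upper e" if "(x, y) \<in> mcP E" "e \<in> E" for y e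
    using mcP_edge_bounds[OF E that] unfolding lower_def upper_def
    by (cases "0 \<le> a e") (auto intro: mult_left_mono mult_left_mono_neg)
  have fibre: "sum lower E \<le> z \<and> z \<le> sum upper E" if z: "(x, z) \<in> mcQ E a" for z
  proof -
    obtain y where "(x, y) \<in> mcP E" "z = (\<Sum>e\<in>E. a e * y e)"
      using z by (auto simp: mcQ_def)
    then show ?thesis using term_bounds by (auto intro: sum_mono)
  qed
  have "(x, \<Sum>e\<in>E. a e * mc_lower x e) \<in> mcQ E a"
    using mc_lower_in_mcP[OF E x] by (auto simp: mcQ_def)
  then have nonempty: "{z. (x, z) \<in> mcQ E a} \<noteq> {}" by blast
  have "mcu E a x \<le> sum upper E"
    unfolding mcu_def using nonempty fibre by (intro cSup_least) auto
  moreover have "sum lower E \<le> mcl E a x"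
    unfolding mcl_def using nonempty fibre by (intro cInf_greatest) auto
  moreover have "upper e - lower e \<le> \<bar>a e * (mc_upper x e - mc_lower x e)\<bar>" for e
    by (auto simp: upper_def lower_def right_diff_distrib abs_if)
  then have "sum upper E - sum lower E \<le> (\<Sum>e\<in>E. \<bar>a e * (mc_upper x e - mc_lower x e)\<bar>)"
    unfolding sum_subtractf[symmetric] by (intro sum_mono)
  ultimately show ?thesis unfolding mcgap_def by linarith
qed

theorem theorem2:
  fixes E :: "('n::finite) set set" and a :: "'n set \<Rightarrow> real" and x :: "real^'n"
  assumes "simple_graph E"
    and "x \<in> unit_cube"
  shows "mcgap E a x \<le> 600 * sqrt (real CARD('n)) * chgap E a x"
proof -
  define c where "c e = a e * (mc_upper x e - mc_lower x e)" for e
  define height where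
    "height \<sigma> = (\<Sum>e\<in>E. a e * (if monochromatic \<sigma> e then mc_upper x e else mc_lower x e))" for \<sigma>
  have height_eq: "height \<sigma> = (\<Sum>e\<in>E. a e * mc_lower x e) + monochromatic_weight E c \<sigma>" for \<sigma>
    unfolding height_def monochromatic_weight_def c_def sum.distrib[symmetric]
    by (intro sum.cong) (auto simp: algebra_simps)
  have hull_bounds: "vex E a x \<le> height \<sigma>" "height \<sigma> \<le> cav E a x" for \<sigma>
    using vex_le_cav_bounds[OF rounding_point_in_convex_hull[OF assms]] by (simp_all add: height_def)
  obtain \<sigma> \<sigma>' where gap: "(\<Sum>e\<in>E. \<bar>c e\<bar>)
      \<le> 8 * sqrt (real CARD('n)) * (monochromatic_weight E c \<sigma> - monochromatic_weight E c \<sigma>')"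
    using exists_colourings_weight_gap[OF assms(1)] by blast
  have gap_le_chgap: "monochromatic_weight E c \<sigma> - monochromatic_weight E c \<sigma>' \<le> chgap E a x"
    using hull_bounds[of \<sigma>] hull_bounds[of \<sigma>'] unfolding height_eq chgap_def by linarith
  have "0 \<le> chgap E a x"
    using hull_bounds[of \<sigma>] unfolding chgap_def by linarith
  have "mcgap E a x \<le> (\<Sum>e\<in>E. \<bar>c e\<bar>)"
    using mcgap_le_sum_abs[OF assms] by (simp add: c_def)
  also have "\<dots> \<le> 8 * sqrt (real CARD('n)) * chgap E a x"
    by (rule order_trans[OF gap mult_left_mono[OF gap_le_chgap]]) simp
  also have "\<dots> \<le> 600 * sqrt (real CARD('n)) * chgap E a x"
    using \<open>0 \<le> chgap E a x\<close> by (intro mult_right_mono) auto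
  finally show ?thesis .
qed

end
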